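(* Let $\sigma$ be a countable relational signature containing a relation symbol $R$ of arity at least $2$, and let $\mathbf P\subseteq\mathbf S_\sigma$ be a property such that for all $\mathcal M,\mathcal N\in\mathbf S_\sigma$ with $\mathrm{Aut}(\mathcal M)\cong\mathrm{Aut}(\mathcal N)$ we have $\mathcal M\in\mathbf P\iff\mathcal N\in\mathbf P$. (a) If every $\mathcal M$ such that $\mathrm{Aut}(\mathcal M)$ has a subgroup isomorphic to $S(\omega)$ satisfies $\mathcal M\notin\mathbf P$, then for every $\mathcal M'\in\mathbf S_\sigma$ (and any $Q\in\sigma\setminus\{R\}$ with $Q^{\mathcal M'}=\emptyset$), every structure of the form $\mathcal M'_Q\cup\bigcup_{i\in I}\mathcal T_i\cup\bigcup_{j\in J}\mathcal T'_j$ and every structure of the form $\bigcup_{i\in I}\mathcal T_i\cup\bigcup_{j\in J}\mathcal T'_j$, where $I$ is infinite, $\mathcal T_i\cong\mathcal T_R$, $\mathcal T'_j\cong\mathcal T'_R$ and all the listed structures have pairwise disjoint universes, does not belong to $\mathbf P$. (b) If every rigid $\mathcal M\in\mathbf S_\sigma$ belongs to $\mathbf P$, then every finite, rigid, connected $\mathcal N\in\mathbf S_\sigma$ with $N\neq\emptyset$ belongs to $\mathbf P$. (c) Suppose $\sigma$ contains a relation symbol $Q\neq R$ and $\mathcal M\in\mathbf P$ satisfies $Q^{\mathcal M}=\emptyset$. Then for every finite, rigid, connected $\mathcal N\in\mathbf S_\sigma$ with $N\neq\emptyset$, $Q^{\mathcal N}=\emptyset$ and $M\cap N=\emptyset$,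 we have $\mathcal M_Q\cup\mathcal N\in\mathbf P$.
   Context: $\mathbf S_\sigma$ is the class of all $\sigma$-structures; a property is a subclass closed under isomorphism. $\mathrm{Aut}(\mathcal M)$ is the automorphism group under composition; $\mathcal M$ is rigid if $\mathrm{Aut}(\mathcal M)$ is trivial. $S(X)$ is the symmetric group of all permutations of $X$, and $\omega$ is the set of finite cardinals. Adjacency in a $\sigma$-structure: distinct $a,b$ are adjacent if they occur together in some tuple of some relation; connectedness and degree are defined from adjacency. An $R$-graph (for $R$ of arity $r\ge2$) is a $\sigma$-structure in which all symbols other than $R$ are empty and $(a_1,\dots,a_r)\in R$ implies $a_1\ne a_2$, $a_2=\dots=a_r$ and $(a_2,a_1,\dots,a_1)\in R$; an $R$-tree is a connected $R$-graph without cycles. $\mathcal T_R$ is an infinite $R$-tree with exactly one element of degree 4 and all others of degree 5; $\mathcal T'_R$ is the infinite $R$-tree with all degrees 5. $\bigcup_i\mathcal M_i$ has universe $\bigcup_iM_i$ and each symbol interpreted as the union of interpretations. If $Q^{\mathcal M}=\emptyset$ and $Q$ has arity $q$, $\mathcal M_Q$ is $\mathcal M$ with $Q$ reinterpreted as $\{(a,\dots,a):a\in M\}$. *)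

theory Defs
  imports "HOL-Algebra.Bij" "HOL-Library.Countable"
begin

text \<open>A relational signature is a type of symbols 's with an arity function ar.
  A structure over the carrier type 'a is a pair (universe, interpretation),
  where the interpretation of a symbol s is a set of tuples (lists) of length ar s.\<close>

type_synonym ('s, 'a) struc = "'a set \<times> ('s \<Rightarrow> 'a list set)"

definition is_struc :: "('s \<Rightarrow> nat) \<Rightarrow> ('s, 'a) struc \<Rightarrow> bool" where
  "is_struc ar M \<longleftrightarrow> (\<forall>s. \<forall>t\<in>snd M s. length t = ar s \<and> set t \<subseteq> fst M)"

definition struc_iso :: "('s, 'a) struc \<Rightarrow> ('s, 'a) struc \<Rightarrow> ('a \<Rightarrow> 'a) \<Rightarrow> bool" where
  "struc_iso M N f \<longleftrightarrow> bij_betw f (fst M) (fst N) \<and>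
     (\<forall>s t. set t \<subseteq> fst M \<longrightarrow> (t \<in> snd M s \<longleftrightarrow> map f t \<in> snd N s))"

definition isomorphic :: "('s, 'a) struc \<Rightarrow> ('s, 'a) struc \<Rightarrow> bool" where
  "isomorphic M N \<longleftrightarrow> (\<exists>f. struc_iso M N f)"

definition is_property :: "('s \<Rightarrow> nat) \<Rightarrow> ('s, 'a) struc set \<Rightarrow> bool" where
  "is_property ar P \<longleftrightarrow> P \<subseteq> {M. is_struc ar M} \<and>
     (\<forall>M N. M \<in> P \<longrightarrow> is_struc ar N \<longrightarrow> isomorphic M N \<longrightarrow> N \<in> P)"

definition automorphisms :: "('s, 'a) struc \<Rightarrow> ('a \<Rightarrow> 'a) set" where
  "automorphisms M = {f. f \<in> extensional (fst M) \<and> struc_iso M M f}"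

definition AutGroup :: "('s, 'a) struc \<Rightarrow> ('a \<Rightarrow> 'a) monoid" where
  "AutGroup M = (BijGroup (fst M))\<lparr>carrier := automorphisms M\<rparr>"

definition rigid :: "('s, 'a) struc \<Rightarrow> bool" where
  "rigid M \<longleftrightarrow> automorphisms M = {(\<lambda>x\<in>fst M. x)}"

definition has_Sym_omega :: "('s, 'a) struc \<Rightarrow> bool" where
  "has_Sym_omega M \<longleftrightarrow> (\<exists>H. subgroup H (AutGroup M) \<and>
      (AutGroup M)\<lparr>carrier := H\<rparr> \<cong> BijGroup (UNIV :: nat set))"

definition adjacent :: "('s, 'a) struc \<Rightarrow> 'a \<Rightarrow> 'a \<Rightarrow> bool" where
  "adjacent M a b \<longleftrightarrow> a \<noteq> b \<and> (\<exists>s. \<exists>t\<in>snd M s. a \<in> set t \<and> b \<in> set t)"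

definition connected_struc :: "('s, 'a) struc \<Rightarrow> bool" where
  "connected_struc M \<longleftrightarrow> (\<forall>a\<in>fst M. \<forall>b\<in>fst M. (adjacent M)\<^sup>*\<^sup>* a b)"

definition has_degree :: "('s, 'a) struc \<Rightarrow> 'a \<Rightarrow> nat \<Rightarrow> bool" where
  "has_degree M a d \<longleftrightarrow> finite {b. adjacent M a b} \<and> card {b. adjacent M a b} = d"

definition has_cycle :: "('s, 'a) struc \<Rightarrow> bool" where
  "has_cycle M \<longleftrightarrow> (\<exists>xs. length xs \<ge> 3 \<and> distinct xs \<and>
      (\<forall>i. Suc i < length xs \<longrightarrow> adjacent M (xs ! i) (xs ! Suc i)) \<and>
      adjacent M (last xs) (hd xs))"

definition R_graph :: "('s \<Rightarrow> nat) \<Rightarrow> 's \<Rightarrow> ('s, 'a) struc \<Rightarrow> bool" where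
  "R_graph ar R M \<longleftrightarrow> is_struc ar M \<and> (\<forall>s. s \<noteq> R \<longrightarrow> snd M s = {}) \<and>
     (\<forall>t\<in>snd M R. \<exists>a b. a \<noteq> b \<and> t = a # replicate (ar R - 1) b \<and>
                         b # replicate (ar R - 1) a \<in> snd M R)"

definition R_tree :: "('s \<Rightarrow> nat) \<Rightarrow> 's \<Rightarrow> ('s, 'a) struc \<Rightarrow> bool" where
  "R_tree ar R M \<longleftrightarrow> R_graph ar R M \<and> connected_struc M \<and> \<not> has_cycle M"

text \<open>M is isomorphic to T_R (T_R is determined up to isomorphism by this description).\<close>
definition is_T_R :: "('s \<Rightarrow> nat) \<Rightarrow> 's \<Rightarrow> ('s, 'a) struc \<Rightarrow> bool" where
  "is_T_R ar R M \<longleftrightarrow> R_tree ar R M \<and> infinite (fst M) \<and>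
     (\<exists>a\<in>fst M. has_degree M a 4 \<and> (\<forall>b\<in>fst M. b \<noteq> a \<longrightarrow> has_degree M b 5))"

definition is_T'_R :: "('s \<Rightarrow> nat) \<Rightarrow> 's \<Rightarrow> ('s, 'a) struc \<Rightarrow> bool" where
  "is_T'_R ar R M \<longleftrightarrow> R_tree ar R M \<and> infinite (fst M) \<and> (\<forall>a\<in>fst M. has_degree M a 5)"

definition struc_Union :: "('s, 'a) struc set \<Rightarrow> ('s, 'a) struc" where
  "struc_Union F = (\<Union>M\<in>F. fst M, \<lambda>s. \<Union>M\<in>F. snd M s)"

definition struc_un :: "('s, 'a) struc \<Rightarrow> ('s, 'a) struc \<Rightarrow> ('s, 'a) struc" where
  "struc_un M N = (fst M \<union> fst N, \<lambda>s. snd M s \<union> snd N s)"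

definition with_Q :: "('s \<Rightarrow> nat) \<Rightarrow> 's \<Rightarrow> ('s, 'a) struc \<Rightarrow> ('s, 'a) struc" where
  "with_Q ar Q M = (fst M, (snd M)(Q := {replicate (ar Q) a | a. a \<in> fst M}))"

end

theory Submission
  imports Defs "HOL-Library.Disjoint_Sets"
begin

text \<open>
  (a) Rooted at its vertex of degree 4, the tree \<open>T\<^sub>R\<close> has exactly four children at
  every vertex, so its vertices correspond, adjacency-preservingly, to the words over a
  four-letter alphabet; hence any two copies of \<open>T\<^sub>R\<close> are isomorphic. Given infinitely
  many disjoint copies inside a union of disjoint structures, every permutation of \<open>\<nat>\<close>
  moves the copies around along fixed isomorphisms and fixes everything else; this embeds
  \<open>S(\<omega>)\<close> into the automorphism group, so the union is not in \<open>P\<close>.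
  (b) is immediate.
  (c) In \<open>M\<^sub>Q \<union> N\<close> the \<open>Q\<close>-loops mark exactly the elements of \<open>M\<close>, so every automorphism
  preserves \<open>M\<close> and \<open>N\<close> setwise and is the identity on the rigid \<open>N\<close>. Thus
  \<open>Aut(M\<^sub>Q \<union> N) \<cong> Aut(M\<^sub>Q) = Aut(M)\<close>, and \<open>P\<close> only depends on the automorphism group.
\<close>

section \<open>Non-backtracking walks\<close>

fun no_backtrack :: "'a list \<Rightarrow> bool" where
  "no_backtrack (x # y # z # zs) \<longleftrightarrow> x \<noteq> z \<and> no_backtrack (y # z # zs)"
| "no_backtrack _ \<longleftrightarrow> True"

lemma no_backtrack_Cons: "no_backtrack (x # xs) \<longleftrightarrow> no_backtrack xs \<and> (2 \<le> length xs \<longrightarrow> x \<noteq> xs ! 1)"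
  by (cases xs rule: no_backtrack.cases) auto

lemma no_backtrack_append:
  "no_backtrack (xs @ ys) \<longleftrightarrow> no_backtrack xs \<and> no_backtrack ys \<and>
     no_backtrack (drop (length xs - 2) xs @ take 2 ys)"
proof (induction xs)
  case (Cons x xs)
  consider "xs = []" | y where "xs = [y]" | y z zs where "xs = y # z # zs"
    by (metis list.exhaust)
  then show ?case
  proof cases
    case 1
    then show ?thesis by (cases ys rule: no_backtrack.cases) auto
  next
    case 2
    then show ?thesis using Cons by (cases ys rule: no_backtrack.cases) auto
  next
    case 3
    then show ?thesis using Cons by (auto simp: no_backtrack_Cons nth_append drop_Cons')
  qed
qed (cases ys rule: no_backtrack.cases; simp)

lemma no_backtrack_rev [simp]: "no_backtrack (rev xs) \<longleftrightarrow> no_backtrack xs"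
proof (induction xs)
  case (Cons x xs)
  have "drop (length xs - 2) (rev xs) = rev (take 2 xs)"
    by (simp add: rev_take)
  moreover have "no_backtrack (rev (take 2 xs) @ [x]) \<longleftrightarrow> (2 \<le> length xs \<longrightarrow> x \<noteq> xs ! 1)"
    by (cases xs rule: no_backtrack.cases) auto
  ultimately show ?case
    using Cons by (simp only: rev.simps no_backtrack_append[of "rev xs"]) (simp add: no_backtrack_Cons)
qed simp

lemma no_backtrack_appendD:
  "no_backtrack (xs @ ys) \<Longrightarrow> no_backtrack xs \<and> no_backtrack ys"
  using no_backtrack_append by blast

lemma cycle_if_not_distinct:
  assumes irrefl: "\<And>a. \<not> E a a"
    and "successively E xs" "no_backtrack xs" "\<not> distinct xs"
  shows "\<exists>ys. 3 \<le> length ys \<and> distinct ys \<and> successively E ys \<and> E (last ys) (hd ys)"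
  using assms(2-)
proof (induction xs rule: length_induct)
  case (1 xs)
  obtain as y bs cs where xs: "xs = as @ [y] @ bs @ [y] @ cs"
    using not_distinct_decomp[OF "1.prems"(3)] by blast
  define zs where "zs = y # bs @ [y]"
  have "xs = (as @ zs) @ cs"
    by (simp add: xs zs_def)
  then have "successively E zs" "no_backtrack zs"
    using "1.prems"(1,2) successively_append_iff no_backtrack_appendD by metis+
  then have walk: "successively E (y # bs @ [y])" and nb: "no_backtrack (y # bs @ [y])"
    by (simp_all add: zs_def)
  show ?case
  proof (cases "distinct (y # bs)")
    case True
    have "bs \<noteq> []"
      using walk irrefl by auto
    moreover have "\<not> (\<exists>b. bs = [b])"
      using nb by auto
    ultimately have "3 \<le> length (y # bs)"
      by (cases bs rule: remdups_adj.cases) auto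
    moreover have "successively E (y # bs)" "E (last (y # bs)) (hd (y # bs))"
      using walk successively_append_iff[of E "y # bs" "[y]"] \<open>bs \<noteq> []\<close> by auto
    ultimately show ?thesis
      using True by blast
  next
    case False
    moreover have "successively E (y # bs)" "no_backtrack (y # bs)"
      using walk nb successively_append_iff[of E "y # bs" "[y]"] no_backtrack_appendD[of "y # bs" "[y]"]
      by auto
    moreover have "length (y # bs) < length xs"
      by (simp add: xs)
    ultimately show ?thesis
      using "1.IH" by blast
  qed
qed

lemma no_backtrack_walk_unique:
  assumes sym: "\<And>a b. E a b \<Longrightarrow> E b a"
    and acyclic: "\<And>xs. successively E xs \<Longrightarrow> no_backtrack xs \<Longrightarrow> distinct xs"
  shows "successively E p \<Longrightarrow> no_backtrack p \<Longrightarrow> successively E q \<Longrightarrow> no_backtrack q \<Longrightarrow>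
    p \<noteq> [] \<Longrightarrow> q \<noteq> [] \<Longrightarrow> hd p = hd q \<Longrightarrow> last p = last q \<Longrightarrow> p = q"
proof (induction p arbitrary: q)
  case (Cons a p')
  have closed_walk: False if "successively E (a # xs)" "no_backtrack (a # xs)" "xs \<noteq> []" "last xs = a" for xs
    using acyclic[OF that(1,2)] that(3,4) last_in_set[of xs] by auto
  obtain q' where q: "q = a # q'"
    using Cons.prems by (cases q) auto
  consider "p' = []" | "q' = []" | "p' \<noteq> []" "q' \<noteq> []" "hd p' = hd q'" | "p' \<noteq> []" "q' \<noteq> []" "hd p' \<noteq> hd q'"
    by blast
  then show ?case
  proof cases
    case 1
    have "q' = []"
    proof (rule ccontr)
      assume "q' \<noteq> []"
      then show False
        using Cons.prems(3,4,8) q 1 by (intro closed_walk[of q']) simp_all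
    qed
    then show ?thesis
      using q 1 by simp
  next
    case 2
    have "p' = []"
    proof (rule ccontr)
      assume "p' \<noteq> []"
      then show False
        using Cons.prems(1,2,8) q 2 by (intro closed_walk[of p']) simp_all
    qed
    then show ?thesis
      using q 2 by simp
  next
    case 3
    then show ?thesis
      using Cons.IH[of q'] Cons.prems q by (simp add: successively_Cons no_backtrack_Cons)
  next
    case 4
    \<comment> \<open>the two walks diverge after \<open>a\<close>; glued together they form a closed walk\<close>
    define zs where "zs = rev p' @ a # q'"
    have "successively E zs"
      using Cons.prems(1,3) 4 sym unfolding zs_def q
      by (auto simp: successively_append_iff successively_Cons last_rev intro: successively_mono)
    moreover have "no_backtrack zs"
    proof -
      have "no_backtrack (rev (take 2 p') @ a # take 1 q')"
        using Cons.prems(2) 4 by (cases p' rule: no_backtrack.cases; cases q') auto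
      then show ?thesis
        using Cons.prems(2,4) q unfolding zs_def no_backtrack_append[of "rev p'"]
        by (simp add: no_backtrack_Cons rev_take)
    qed
    ultimately have "distinct zs"
      by (rule acyclic)
    moreover have "last p' = last q'"
      using Cons.prems(8) q 4 by simp
    moreover have "last p' \<in> set p'" "last q' \<in> set q'"
      using 4 by simp_all
    ultimately show ?thesis
      by (auto simp: zs_def)
  qed
qed simp

section \<open>Trees in which every vertex has \<open>k\<close> children\<close>

locale branching_tree =
  fixes k :: nat and V :: "'a set" and E :: "'a \<Rightarrow> 'a \<Rightarrow> bool" and r :: 'a
  assumes sym: "\<And>a b. E a b \<Longrightarrow> E b a"
    and edge_in: "\<And>a b. E a b \<Longrightarrow> a \<in> V"
    and root_in: "r \<in> V"
    and connected: "\<And>v. v \<in> V \<Longrightarrow> E\<^sup>*\<^sup>* r v"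
    and acyclic: "\<And>xs. successively E xs \<Longrightarrow> no_backtrack xs \<Longrightarrow> distinct xs"
    and root_degree: "finite {w. E r w}" "card {w. E r w} = k"
    and degree: "\<And>v. v \<in> V \<Longrightarrow> v \<noteq> r \<Longrightarrow> finite {w. E v w} \<and> card {w. E v w} = Suc k"
begin

definition rooted_walk :: "'a list \<Rightarrow> bool" where
  "rooted_walk p \<longleftrightarrow> p \<noteq> [] \<and> successively E p \<and> no_backtrack p \<and> last p = r \<and> hd p \<in> V"

text \<open>Vertices are addressed by words over \<open>{..<k}\<close>, read from the last letter:
  \<open>word_path ws\<close> is the non-backtracking walk from the addressed vertex back to the root,
  and each letter picks one of the \<open>k\<close> neighbours of the current head other than its
  predecessor, enumerated by \<open>child\<close>.\<close>

definition forward :: "'a list \<Rightarrow> 'a set" where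
  "forward p = {w. E (hd p) w} - set (take 1 (tl p))"

definition child :: "'a list \<Rightarrow> nat \<Rightarrow> 'a" where
  "child p = (SOME g. bij_betw g {..<k} (forward p))"

fun word_path :: "nat list \<Rightarrow> 'a list" where
  "word_path [] = [r]"
| "word_path (i # is) = child (word_path is) i # word_path is"

definition vertex :: "nat list \<Rightarrow> 'a" where
  "vertex ws = hd (word_path ws)"

lemma rooted_walk_unique:
  "rooted_walk p \<Longrightarrow> rooted_walk q \<Longrightarrow> hd p = hd q \<Longrightarrow> p = q"
  unfolding rooted_walk_def by (intro no_backtrack_walk_unique[OF sym acyclic]) auto

lemma card_forward:
  assumes p: "rooted_walk p"
  shows "finite (forward p) \<and> card (forward p) = k"
proof -
  obtain v rest where p_eq: "p = v # rest"
    using p by (cases p) (auto simp: rooted_walk_def)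
  show ?thesis
  proof (cases rest)
    case Nil
    then show ?thesis
      using p p_eq root_degree by (simp add: rooted_walk_def forward_def)
  next
    case (Cons u rest')
    have "v \<noteq> r"
    proof
      assume "v = r"
      then have "p = [r]"
        using p root_in by (intro rooted_walk_unique) (auto simp: rooted_walk_def p_eq)
      then show False
        using p_eq Cons by simp
    qed
    moreover have "E v u" "v \<in> V"
      using p p_eq Cons by (auto simp: rooted_walk_def)
    ultimately show ?thesis
      using degree[of v] p_eq Cons by (simp add: forward_def)
  qed
qed

lemma child_bij:
  assumes "rooted_walk p"
  shows "bij_betw (child p) {..<k} (forward p)"
proof -
  have "\<exists>g. bij_betw g {..<k} (forward p)"
    using card_forward[OF assms] ex_bij_betw_nat_finite[of "forward p"] by (auto simp: lessThan_atLeast0)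
  then show ?thesis
    unfolding child_def by (rule someI_ex)
qed

lemma rooted_walk_child:
  assumes p: "rooted_walk p" and i: "i < k"
  shows "rooted_walk (child p i # p)"
proof -
  have "child p i \<in> forward p"
    using child_bij[OF p] i by (auto simp: bij_betw_def)
  then show ?thesis
    using p sym edge_in by (cases p; cases "tl p") (auto simp: rooted_walk_def forward_def)
qed

lemma rooted_walk_word_path: "ws \<in> lists {..<k} \<Longrightarrow> rooted_walk (word_path ws)"
proof (induction ws)
  case Nil
  then show ?case
    by (simp add: rooted_walk_def root_in)
qed (simp add: rooted_walk_child)

lemma length_word_path [simp]: "length (word_path ws) = Suc (length ws)"
  by (induction ws) auto

lemma vertex_Cons [simp]: "vertex (i # ws) = child (word_path ws) i"
  by (simp add: vertex_def)

lemma word_path_inj: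
  "ws \<in> lists {..<k} \<Longrightarrow> ws' \<in> lists {..<k} \<Longrightarrow> word_path ws = word_path ws' \<Longrightarrow> ws = ws'"
proof (induction ws arbitrary: ws')
  case Nil
  then show ?case
    using Nil.prems(3) by (metis length_0_conv length_word_path nat.inject)
next
  case (Cons i ws)
  have "length ws' = Suc (length ws)"
    using arg_cong[OF Cons.prems(3), of length] by (simp only: length_word_path) simp
  then obtain j ws'' where ws': "ws' = j # ws''"
    by (cases ws') auto
  then have "ws = ws''"
    using Cons by simp
  moreover have "inj_on (child (word_path ws)) {..<k}"
    using child_bij[OF rooted_walk_word_path] Cons.prems by (simp add: bij_betw_def)
  ultimately show ?case
    using Cons.prems ws' by (auto dest: inj_onD)
qed

lemma inj_on_vertex: "inj_on vertex (lists {..<k})"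
proof (rule inj_onI)
  fix ws ws' assume ws: "ws \<in> lists {..<k}" "ws' \<in> lists {..<k}" and "vertex ws = vertex ws'"
  then have "word_path ws = word_path ws'"
    using rooted_walk_word_path by (intro rooted_walk_unique) (auto simp: vertex_def)
  then show "ws = ws'"
    using word_path_inj ws by blast
qed

lemma vertex_neighbour:
  assumes ws: "ws \<in> lists {..<k}" and e: "E (vertex ws) w"
  shows "(\<exists>i ws'. ws = i # ws' \<and> w = vertex ws') \<or> (\<exists>i<k. w = vertex (i # ws))"
proof (cases "w \<in> set (take 1 (tl (word_path ws)))")
  case True
  then obtain i ws' where "ws = i # ws'"
    by (cases ws) auto
  then show ?thesis
    using True by (cases ws') (auto simp: vertex_def)
next
  case False
  then have "w \<in> forward (word_path ws)"
    using e by (simp add: forward_def vertex_def)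
  then obtain i where "i < k" "w = child (word_path ws) i"
    using child_bij[OF rooted_walk_word_path[OF ws]] by (auto simp: bij_betw_def)
  then show ?thesis
    by auto
qed

lemma vertex_adjacent_iff:
  assumes "ws \<in> lists {..<k}" "ws' \<in> lists {..<k}"
  shows "E (vertex ws) (vertex ws') \<longleftrightarrow> (\<exists>i. ws' = i # ws) \<or> (\<exists>i. ws = i # ws')"
proof
  assume "E (vertex ws) (vertex ws')"
  then consider i ws'' where "ws = i # ws''" "vertex ws' = vertex ws''" | i where "i < k" "vertex ws' = vertex (i # ws)"
    using vertex_neighbour[OF assms(1)] by blast
  then show "(\<exists>i. ws' = i # ws) \<or> (\<exists>i. ws = i # ws')"
  proof cases
    case 1
    then show ?thesis
      using assms inj_on_vertex by (auto dest: inj_onD)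
  next
    case 2
    then have "i # ws \<in> lists {..<k}"
      using assms(1) by simp
    then have "ws' = i # ws"
      using inj_onD[OF inj_on_vertex 2(2) assms(2)] by blast
    then show ?thesis
      by blast
  qed
next
  have edge: "E (vertex (i # ws)) (vertex ws)" if "i # ws \<in> lists {..<k}" for i ws
    using rooted_walk_word_path[OF that] by (cases ws) (auto simp: rooted_walk_def vertex_def)
  assume "(\<exists>i. ws' = i # ws) \<or> (\<exists>i. ws = i # ws')"
  then show "E (vertex ws) (vertex ws')"
    using edge assms sym by blast
qed

lemma bij_betw_vertex: "bij_betw vertex (lists {..<k}) V"
proof -
  have "v \<in> vertex ` lists {..<k}" if "v \<in> V" for v
    using connected[OF that]
  proof (induction rule: rtranclp_induct)
    case base
    have "r = vertex []"
      by (simp add: vertex_def)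
    then show ?case
      by blast
  next
    case (step u w)
    then obtain ws where "ws \<in> lists {..<k}" "u = vertex ws"
      by blast
    then show ?case
      using vertex_neighbour step.hyps(2) by fastforce
  qed
  moreover have "vertex ws \<in> V" if "ws \<in> lists {..<k}" for ws
    using rooted_walk_word_path[OF that] by (simp add: rooted_walk_def vertex_def)
  ultimately show ?thesis
    using inj_on_vertex by (auto simp: bij_betw_def)
qed

end

lemma branching_tree_isomorphism:
  assumes "branching_tree k V E r" "branching_tree k V' E' r'"
  obtains f where "bij_betw f V V'" "\<And>a b. a \<in> V \<Longrightarrow> b \<in> V \<Longrightarrow> E a b \<longleftrightarrow> E' (f a) (f b)"
proof -
  interpret T: branching_tree k V E r by fact
  interpret T': branching_tree k V' E' r' by fact
  define g where "g = inv_into (lists {..<k}) T.vertex"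
  have g: "bij_betw g V (lists {..<k})"
    unfolding g_def by (rule bij_betw_inv_into[OF T.bij_betw_vertex])
  show thesis
  proof
    show "bij_betw (T'.vertex \<circ> g) V V'"
      using g T'.bij_betw_vertex by (rule bij_betw_trans)
    fix a b assume ab: "a \<in> V" "b \<in> V"
    then have "g a \<in> lists {..<k}" "g b \<in> lists {..<k}"
      using g by (auto dest: bij_betwE)
    moreover have "T.vertex (g x) = x" if "x \<in> V" for x
      using that T.bij_betw_vertex by (simp add: g_def bij_betw_inv_into_right)
    ultimately have "E a b \<longleftrightarrow> E (T.vertex (g a)) (T.vertex (g b))"
      using ab by simp
    also have "\<dots> \<longleftrightarrow> E' (T'.vertex (g a)) (T'.vertex (g b))"
      using T.vertex_adjacent_iff T'.vertex_adjacent_iff \<open>g a \<in> _\<close> \<open>g b \<in> _\<close> by simp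
    finally show "E a b \<longleftrightarrow> E' ((T'.vertex \<circ> g) a) ((T'.vertex \<circ> g) b)"
      by simp
  qed
qed

lemma adjacent_sym: "adjacent M a b \<Longrightarrow> adjacent M b a"
  by (auto simp: adjacent_def)

lemma adjacent_in_universe: "is_struc ar M \<Longrightarrow> adjacent M a b \<Longrightarrow> a \<in> fst M \<and> b \<in> fst M"
  by (auto simp: adjacent_def is_struc_def)

lemma is_struc_struc_Union: "(\<And>D. D \<in> F \<Longrightarrow> is_struc ar D) \<Longrightarrow> is_struc ar (struc_Union F)"
  by (fastforce simp: is_struc_def struc_Union_def)

lemma is_struc_struc_un: "is_struc ar A \<Longrightarrow> is_struc ar N \<Longrightarrow> is_struc ar (struc_un A N)"
  unfolding is_struc_def struc_un_def by (simp; blast)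

lemma is_struc_with_Q: "is_struc ar M \<Longrightarrow> is_struc ar (with_Q ar Q M)"
  by (auto simp: is_struc_def with_Q_def)

lemma is_struc_empty: "is_struc ar ({}, \<lambda>_. {})"
  by (simp add: is_struc_def)

lemma struc_Union_insert_empty: "struc_Union (insert ({}, \<lambda>_. {}) F) = struc_Union F"
  by (simp add: struc_Union_def)

lemma struc_un_commute: "struc_un A N = struc_un N A"
  by (auto simp: struc_un_def)

lemma fst_with_Q [simp]: "fst (with_Q ar Q M) = fst M"
  by (simp add: with_Q_def)

lemma struc_isoI:
  assumes "bij_betw f (fst A) (fst B)" and "\<And>x. x \<in> fst A \<Longrightarrow> g (f x) = x"
    and "\<And>s t. t \<in> snd A s \<Longrightarrow> map f t \<in> snd B s"
    and "\<And>s t. t \<in> snd B s \<Longrightarrow> map g t \<in> snd A s"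
  shows "struc_iso A B f"
proof -
  have "map g (map f t) = t" if "set t \<subseteq> fst A" for t
    using that assms(2) by (induction t) auto
  then show ?thesis
    unfolding struc_iso_def using assms(1,3,4) by metis
qed

lemma struc_iso_cong:
  assumes "struc_iso A B f" and "\<And>x. x \<in> fst A \<Longrightarrow> f x = g x"
  shows "struc_iso A B g"
  unfolding struc_iso_def
proof (intro conjI allI impI)
  show "bij_betw g (fst A) (fst B)"
    using assms bij_betw_cong[of "fst A" f g] by (auto simp: struc_iso_def)
  fix s t assume t: "set t \<subseteq> fst A"
  then have "map g t = map f t"
    using assms(2) by (intro map_cong) auto
  then show "t \<in> snd A s \<longleftrightarrow> map g t \<in> snd B s"
    using assms(1) t unfolding struc_iso_def by metis
qed

lemma struc_iso_id: "struc_iso A A id"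
  by (simp add: struc_iso_def)

lemma struc_iso_comp:
  assumes f: "struc_iso A B f" and g: "struc_iso B C g"
  shows "struc_iso A C (g \<circ> f)"
proof -
  have "set (map f t) \<subseteq> fst B" if "set t \<subseteq> fst A" for t
    using that f by (auto simp: struc_iso_def bij_betw_def)
  then show ?thesis
    using f g by (auto simp: struc_iso_def intro: bij_betw_trans)
qed

lemma struc_iso_inv_into:
  assumes f: "struc_iso A B f"
  shows "struc_iso B A (inv_into (fst A) f)"
proof -
  have bij: "bij_betw f (fst A) (fst B)"
    using f by (simp add: struc_iso_def)
  have "set (map (inv_into (fst A) f) t) \<subseteq> fst A" "map f (map (inv_into (fst A) f) t) = t"
    if "set t \<subseteq> fst B" for t
    using that bij by (auto simp: bij_betw_def inv_into_into, induction t) (auto simp: f_inv_into_f)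
  then show ?thesis
    using f bij_betw_inv_into[OF bij] by (auto simp: struc_iso_def)
qed

section \<open>\<open>R\<close>-graphs and the tree \<open>T\<^sub>R\<close>\<close>

lemma R_graph_tuple_iff:
  assumes g: "R_graph ar R A" and ar: "2 \<le> ar R"
  shows "t \<in> snd A s \<longleftrightarrow> s = R \<and> (\<exists>a b. adjacent A a b \<and> t = a # replicate (ar R - 1) b)"
proof
  assume t: "t \<in> snd A s"
  then have "s = R"
    using g by (auto simp: R_graph_def)
  moreover obtain a b where "a \<noteq> b" "t = a # replicate (ar R - 1) b"
    using g t \<open>s = R\<close> by (auto simp: R_graph_def)
  moreover have "adjacent A a b"
    using calculation t ar unfolding adjacent_def by force
  ultimately show "s = R \<and> (\<exists>a b. adjacent A a b \<and> t = a # replicate (ar R - 1) b)"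
    by blast
next
  assume "s = R \<and> (\<exists>a b. adjacent A a b \<and> t = a # replicate (ar R - 1) b)"
  then obtain a b where s: "s = R" and ab: "adjacent A a b" and t: "t = a # replicate (ar R - 1) b"
    by blast
  obtain s' u where u: "u \<in> snd A s'" "a \<in> set u" "b \<in> set u" "a \<noteq> b"
    using ab unfolding adjacent_def by blast
  moreover have "s' = R"
    using u g by (auto simp: R_graph_def)
  ultimately obtain c d where cd: "u = c # replicate (ar R - 1) d" "d # replicate (ar R - 1) c \<in> snd A R"
    using g unfolding R_graph_def by blast
  then have "set u = {c, d}"
    using ar by simp
  then show "t \<in> snd A s"
    using cd u \<open>s' = R\<close> s t by auto
qed

lemma R_graph_map_tuple:
  assumes A: "R_graph ar R A" and B: "R_graph ar R B" and ar: "2 \<le> ar R"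
    and adj: "\<And>a b. adjacent A a b \<Longrightarrow> adjacent B (f a) (f b)"
    and t: "t \<in> snd A s"
  shows "map f t \<in> snd B s"
proof -
  obtain a b where "s = R" "adjacent A a b" "t = a # replicate (ar R - 1) b"
    using t R_graph_tuple_iff[OF A ar] by blast
  then show ?thesis
    using adj R_graph_tuple_iff[OF B ar] by (auto simp: map_replicate)
qed

lemma R_graph_struc_iso:
  assumes A: "R_graph ar R A" and B: "R_graph ar R B" and ar: "2 \<le> ar R"
    and f: "bij_betw f (fst A) (fst B)"
    and adj: "\<And>a b. a \<in> fst A \<Longrightarrow> b \<in> fst A \<Longrightarrow> adjacent A a b \<longleftrightarrow> adjacent B (f a) (f b)"
  shows "struc_iso A B f"
proof (rule struc_isoI[OF f])
  let ?g = "inv_into (fst A) f"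
  have struc: "is_struc ar A" "is_struc ar B"
    using A B by (simp_all add: R_graph_def)
  show "?g (f x) = x" if "x \<in> fst A" for x
    using f that by (simp add: bij_betw_inv_into_left)
  show "map f t \<in> snd B s" if "t \<in> snd A s" for s t
    using adjacent_in_universe[OF struc(1)] adj by (intro R_graph_map_tuple[OF A B ar _ that]) blast
  have "adjacent A (?g c) (?g d)" if "adjacent B c d" for c d
  proof -
    have "c \<in> fst B" "d \<in> fst B"
      using adjacent_in_universe[OF struc(2) that] by auto
    then show ?thesis
      using that adj[of "?g c" "?g d"] f
      by (simp add: bij_betw_inv_into_right bij_betw_apply[OF bij_betw_inv_into[OF f]])
  qed
  then show "map ?g t \<in> snd A s" if "t \<in> snd B s" for s t
    by (rule R_graph_map_tuple[OF B A ar _ that])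
qed

lemma distinct_if_no_cycle:
  assumes "\<not> has_cycle M" "successively (adjacent M) xs" "no_backtrack xs"
  shows "distinct xs"
proof (rule ccontr)
  assume "\<not> distinct xs"
  then have "has_cycle M"
    using cycle_if_not_distinct[of "adjacent M", OF _ assms(2,3)]
    by (auto simp: has_cycle_def adjacent_def successively_conv_nth)
  with assms(1) show False ..
qed

lemma is_struc_if_T_R: "is_T_R ar R A \<Longrightarrow> is_struc ar A"
  and is_struc_if_T'_R: "is_T'_R ar R A \<Longrightarrow> is_struc ar A"
  by (simp_all add: is_T_R_def is_T'_R_def R_tree_def R_graph_def)

lemma T_R_branching_tree:
  assumes T: "is_T_R ar R A"
  obtains r where "branching_tree 4 (fst A) (adjacent A) r"
proof -
  have struc: "is_struc ar A" and conn: "connected_struc A" and acyc: "\<not> has_cycle A"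
    using T by (auto simp: is_T_R_def R_tree_def R_graph_def)
  obtain r where r: "r \<in> fst A" "has_degree A r 4" "\<forall>b\<in>fst A. b \<noteq> r \<longrightarrow> has_degree A b 5"
    using T by (auto simp: is_T_R_def)
  have "branching_tree 4 (fst A) (adjacent A) r"
    using adjacent_sym[of A] adjacent_in_universe[OF struc] distinct_if_no_cycle[OF acyc] r conn
    by unfold_locales (auto simp: connected_struc_def has_degree_def)
  then show thesis
    by (rule that)
qed

lemma T_R_isomorphic:
  assumes A: "is_T_R ar R A" and B: "is_T_R ar R B" and ar: "2 \<le> ar R"
  shows "isomorphic A B"
proof -
  obtain r r' where "branching_tree 4 (fst A) (adjacent A) r" "branching_tree 4 (fst B) (adjacent B) r'"
    using T_R_branching_tree A B by metis
  then obtain f where "bij_betw f (fst A) (fst B)"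
    "\<And>a b. a \<in> fst A \<Longrightarrow> b \<in> fst A \<Longrightarrow> adjacent A a b \<longleftrightarrow> adjacent B (f a) (f b)"
    using branching_tree_isomorphism by metis
  then have "struc_iso A B f"
    using A B ar by (intro R_graph_struc_iso) (auto simp: is_T_R_def R_tree_def)
  then show ?thesis
    by (auto simp: isomorphic_def)
qed

lemma automorphisms_eq: "automorphisms M = Bij (fst M) \<inter> {f. struc_iso M M f}"
  by (auto simp: automorphisms_def Bij_def struc_iso_def)

lemma subgroup_automorphisms: "subgroup (automorphisms M) (BijGroup (fst M))"
proof (rule subgroup.intro)
  show "automorphisms M \<subseteq> carrier (BijGroup (fst M))"
    by (auto simp: automorphisms_eq BijGroup_def)
  show "\<one>\<^bsub>BijGroup (fst M)\<^esub> \<in> automorphisms M"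
    using id_Bij struc_iso_cong[OF struc_iso_id[of M], where g="\<lambda>x\<in>fst M. x"]
    by (auto simp: automorphisms_eq BijGroup_def)
next
  fix f g assume "f \<in> automorphisms M" "g \<in> automorphisms M"
  then show "f \<otimes>\<^bsub>BijGroup (fst M)\<^esub> g \<in> automorphisms M"
    using compose_Bij struc_iso_cong[OF struc_iso_comp[of M M g M f]]
    by (auto simp: automorphisms_eq BijGroup_def compose_def)
next
  fix f assume "f \<in> automorphisms M"
  then show "inv\<^bsub>BijGroup (fst M)\<^esub> f \<in> automorphisms M"
    using restrict_inv_into_Bij struc_iso_cong[OF struc_iso_inv_into[of M M f]]
    by (auto simp: automorphisms_eq inv_BijGroup)
qed

lemma group_AutGroup: "group (AutGroup M)"
  unfolding AutGroup_def by (rule subgroup.subgroup_is_group[OF subgroup_automorphisms group_BijGroup])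

lemma carrier_AutGroup [simp]: "carrier (AutGroup M) = automorphisms M"
  by (simp add: AutGroup_def)

lemma mult_AutGroup:
  "f \<in> automorphisms M \<Longrightarrow> g \<in> automorphisms M \<Longrightarrow> f \<otimes>\<^bsub>AutGroup M\<^esub> g = compose (fst M) f g"
  by (simp add: AutGroup_def BijGroup_def automorphisms_eq)

lemma automorphismI:
  assumes "f \<in> extensional (fst M)" "bij_betw f (fst M) (fst M)"
    and "\<And>x. x \<in> fst M \<Longrightarrow> g (f x) = x"
    and "\<And>s t. t \<in> snd M s \<Longrightarrow> map f t \<in> snd M s"
    and "\<And>s t. t \<in> snd M s \<Longrightarrow> map g t \<in> snd M s"
  shows "f \<in> automorphisms M"
  using assms struc_isoI[of f M M g] by (simp add: automorphisms_def)

lemma has_Sym_omegaI: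
  assumes hom: "\<Phi> \<in> hom (BijGroup (UNIV :: nat set)) (AutGroup M)"
    and inj: "inj_on \<Phi> (carrier (BijGroup (UNIV :: nat set)))"
  shows "has_Sym_omega M"
proof -
  let ?H = "\<Phi> ` carrier (BijGroup (UNIV :: nat set))"
  have "group_hom (BijGroup (UNIV :: nat set)) (AutGroup M) \<Phi>"
    using hom by (simp add: group_hom_def group_hom_axioms_def group_BijGroup group_AutGroup)
  then have "subgroup ?H (AutGroup M)"
    by (rule group_hom.img_is_subgroup)
  moreover have "\<Phi> \<in> iso (BijGroup (UNIV :: nat set)) ((AutGroup M)\<lparr>carrier := ?H\<rparr>)"
    using hom inj by (auto simp: iso_def hom_def bij_betw_def)
  then have "(AutGroup M)\<lparr>carrier := ?H\<rparr> \<cong> BijGroup (UNIV :: nat set)"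
    by (intro group.iso_sym[OF group_BijGroup] is_isoI)
  ultimately show ?thesis
    unfolding has_Sym_omega_def by blast
qed

section \<open>Infinitely many isomorphic blocks give a copy of \<open>S(\<omega>)\<close>\<close>

locale isomorphic_blocks =
  fixes ar :: "'s \<Rightarrow> nat" and F :: "('s, 'a) struc set" and B :: "nat \<Rightarrow> ('s, 'a) struc"
  assumes struc: "\<And>D. D \<in> F \<Longrightarrow> is_struc ar D"
    and disjoint: "disjoint_family_on fst F"
    and inj_B: "inj B" and B_in: "\<And>n. B n \<in> F"
    and B_nonempty: "\<And>n. fst (B n) \<noteq> {}"
    and B_isomorphic: "\<And>n. isomorphic (B 0) (B n)"
begin

lemma B_disjoint: "n \<noteq> m \<Longrightarrow> fst (B n) \<inter> fst (B m) = {}"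
  using disjoint_family_onD[OF disjoint B_in B_in] inj_B by (auto dest: injD)

lemma B_subset: "fst (B n) \<subseteq> fst (struc_Union F)"
  using B_in by (auto simp: struc_Union_def)

definition block_iso :: "nat \<Rightarrow> 'a \<Rightarrow> 'a" where
  "block_iso n = (SOME f. struc_iso (B 0) (B n) f)"

text \<open>All isomorphisms between blocks are routed through \<open>B 0\<close>. This makes them compose
  coherently (\<open>transfer_transfer\<close>), which is what turns \<open>\<pi> \<mapsto> perm_blocks \<pi>\<close> into
  a group homomorphism.\<close>

definition transfer :: "nat \<Rightarrow> nat \<Rightarrow> 'a \<Rightarrow> 'a" where
  "transfer n m = block_iso m \<circ> inv_into (fst (B 0)) (block_iso n)"

lemma struc_iso_block_iso: "struc_iso (B 0) (B n) (block_iso n)"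
  using B_isomorphic[of n] unfolding isomorphic_def block_iso_def by (rule someI_ex)

lemma struc_iso_transfer: "struc_iso (B n) (B m) (transfer n m)"
  unfolding transfer_def
  by (rule struc_iso_comp[OF struc_iso_inv_into[OF struc_iso_block_iso] struc_iso_block_iso])

lemma transfer_in: "x \<in> fst (B n) \<Longrightarrow> transfer n m x \<in> fst (B m)"
  using struc_iso_transfer by (auto simp: struc_iso_def dest: bij_betwE)

lemma transfer_transfer:
  assumes "x \<in> fst (B n)"
  shows "transfer m l (transfer n m x) = transfer n l x"
proof -
  have "inv_into (fst (B 0)) (block_iso n) x \<in> fst (B 0)"
    using assms struc_iso_block_iso[of n] by (auto simp: struc_iso_def bij_betw_def inv_into_into)
  moreover have "bij_betw (block_iso m) (fst (B 0)) (fst (B m))"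
    using struc_iso_block_iso[of m] by (simp add: struc_iso_def)
  ultimately show ?thesis
    by (simp add: transfer_def bij_betw_inv_into_left)
qed

lemma transfer_self: "x \<in> fst (B n) \<Longrightarrow> transfer n n x = x"
  using struc_iso_block_iso[of n] bij_betw_inv_into_right[of "block_iso n" "fst (B 0)" "fst (B n)" x]
  by (simp add: transfer_def struc_iso_def)

definition block :: "'a \<Rightarrow> nat" where
  "block x = (THE n. x \<in> fst (B n))"

lemma block_eq: "x \<in> fst (B n) \<Longrightarrow> block x = n"
  unfolding block_def using B_disjoint by blast

definition perm_blocks :: "(nat \<Rightarrow> nat) \<Rightarrow> 'a \<Rightarrow> 'a" where
  "perm_blocks \<pi> = (\<lambda>x\<in>fst (struc_Union F).
     if x \<in> (\<Union>n. fst (B n)) then transfer (block x) (\<pi> (block x)) x else x)"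

lemma perm_blocks_in_block: "x \<in> fst (B n) \<Longrightarrow> perm_blocks \<pi> x = transfer n (\<pi> n) x"
  using B_subset block_eq by (auto simp: perm_blocks_def)

lemma perm_blocks_outside:
  "x \<in> fst (struc_Union F) \<Longrightarrow> x \<notin> (\<Union>n. fst (B n)) \<Longrightarrow> perm_blocks \<pi> x = x"
  by (simp add: perm_blocks_def)

lemma perm_blocks_in_universe:
  assumes "x \<in> fst (struc_Union F)"
  shows "perm_blocks \<pi> x \<in> fst (struc_Union F)"
proof (cases "x \<in> (\<Union>n. fst (B n))")
  case True
  then obtain n where x: "x \<in> fst (B n)"
    by blast
  have "perm_blocks \<pi> x \<in> fst (B (\<pi> n))"
    unfolding perm_blocks_in_block[OF x] by (rule transfer_in[OF x])
  then show ?thesis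
    using B_subset by blast
next
  case False
  show ?thesis
    unfolding perm_blocks_outside[OF assms False] by (rule assms)
qed

lemma perm_blocks_comp:
  assumes "x \<in> fst (struc_Union F)"
  shows "perm_blocks \<sigma> (perm_blocks \<pi> x) = perm_blocks (\<sigma> \<circ> \<pi>) x"
proof (cases "x \<in> (\<Union>n. fst (B n))")
  case True
  then obtain n where x: "x \<in> fst (B n)"
    by blast
  have "perm_blocks \<sigma> (perm_blocks \<pi> x) = transfer (\<pi> n) (\<sigma> (\<pi> n)) (transfer n (\<pi> n) x)"
    unfolding perm_blocks_in_block[OF x] by (rule perm_blocks_in_block[OF transfer_in[OF x]])
  also have "\<dots> = perm_blocks (\<sigma> \<circ> \<pi>) x"
    unfolding perm_blocks_in_block[OF x] transfer_transfer[OF x] by simp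
  finally show ?thesis .
next
  case False
  then show ?thesis
    by (simp only: perm_blocks_outside[OF assms False])
qed

lemma perm_blocks_id:
  assumes "x \<in> fst (struc_Union F)"
  shows "perm_blocks id x = x"
proof (cases "x \<in> (\<Union>n. fst (B n))")
  case True
  then obtain n where "x \<in> fst (B n)"
    by blast
  then show ?thesis
    using perm_blocks_in_block transfer_self by simp
qed (use perm_blocks_outside[OF assms] in blast)

lemma perm_blocks_tuple:
  assumes "t \<in> snd (struc_Union F) s"
  shows "map (perm_blocks \<pi>) t \<in> snd (struc_Union F) s"
proof -
  obtain D where D: "D \<in> F" "t \<in> snd D s"
    using assms by (auto simp: struc_Union_def)
  then have t_D: "set t \<subseteq> fst D"
    using struc by (auto simp: is_struc_def)
  show ?thesis
  proof (cases "D \<in> range B")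
    case True
    then obtain n where "D = B n"
      by blast
    then have "map (perm_blocks \<pi>) t = map (transfer n (\<pi> n)) t"
      using t_D perm_blocks_in_block by (intro map_cong) auto
    moreover have "map (transfer n (\<pi> n)) t \<in> snd (B (\<pi> n)) s"
      using struc_iso_transfer D t_D \<open>D = B n\<close> by (auto simp: struc_iso_def)
    ultimately have "map (perm_blocks \<pi>) t \<in> snd (B (\<pi> n)) s"
      by metis
    then show ?thesis
      using B_in by (auto simp: struc_Union_def)
  next
    case False
    then have "set t \<inter> (\<Union>n. fst (B n)) = {}"
      using t_D disjoint_family_onD[OF disjoint D(1) B_in] by fastforce
    moreover have "set t \<subseteq> fst (struc_Union F)"
      using t_D D(1) by (auto simp: struc_Union_def)
    ultimately have "map (perm_blocks \<pi>) t = t"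
      using perm_blocks_outside by (intro map_idI) blast
    then show ?thesis
      using assms by simp
  qed
qed

lemma perm_blocks_automorphism:
  assumes "bij \<pi>"
  shows "perm_blocks \<pi> \<in> automorphisms (struc_Union F)"
proof (rule automorphismI)
  let ?g = "perm_blocks (inv_into UNIV \<pi>)"
  have "inv_into UNIV \<pi> \<circ> \<pi> = id" "\<pi> \<circ> inv_into UNIV \<pi> = id"
    using assms inv_o_cancel[of \<pi>] surj_iff[of \<pi>] by (simp_all add: bij_is_inj bij_is_surj)
  then have inverse: "?g (perm_blocks \<pi> x) = x" "perm_blocks \<pi> (?g x) = x"
    if "x \<in> fst (struc_Union F)" for x
    using that perm_blocks_comp perm_blocks_id by metis+
  show "bij_betw (perm_blocks \<pi>) (fst (struc_Union F)) (fst (struc_Union F))"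
    using inverse perm_blocks_in_universe by (auto intro!: bij_betwI[where g = ?g])
  show "?g (perm_blocks \<pi> x) = x" if "x \<in> fst (struc_Union F)" for x
    using inverse that by blast
  show "perm_blocks \<pi> \<in> extensional (fst (struc_Union F))"
    by (simp add: perm_blocks_def)
  show "map (perm_blocks \<pi>) t \<in> snd (struc_Union F) s" "map ?g t \<in> snd (struc_Union F) s"
    if "t \<in> snd (struc_Union F) s" for s t
    using that by (rule perm_blocks_tuple)+
qed

lemma perm_blocks_hom: "perm_blocks \<in> hom (BijGroup (UNIV :: nat set)) (AutGroup (struc_Union F))"
proof (rule homI)
  show "perm_blocks \<pi> \<in> carrier (AutGroup (struc_Union F))" if "\<pi> \<in> carrier (BijGroup UNIV)" for \<pi>
    using that perm_blocks_automorphism by (simp add: BijGroup_def Bij_def)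
next
  fix \<pi> \<sigma> :: "nat \<Rightarrow> nat" assume "\<pi> \<in> carrier (BijGroup UNIV)" "\<sigma> \<in> carrier (BijGroup UNIV)"
  then have bij: "bij \<pi>" "bij \<sigma>" "\<pi> \<otimes>\<^bsub>BijGroup UNIV\<^esub> \<sigma> = \<pi> \<circ> \<sigma>"
    by (auto simp: BijGroup_def Bij_def compose_def)
  have "perm_blocks (\<pi> \<circ> \<sigma>) = compose (fst (struc_Union F)) (perm_blocks \<pi>) (perm_blocks \<sigma>)"
  proof
    fix x
    show "perm_blocks (\<pi> \<circ> \<sigma>) x = compose (fst (struc_Union F)) (perm_blocks \<pi>) (perm_blocks \<sigma>) x"
      using perm_blocks_comp[of x] by (cases "x \<in> fst (struc_Union F)") (simp_all add: compose_def perm_blocks_def[of "\<pi> \<circ> \<sigma>"])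
  qed
  then show "perm_blocks (\<pi> \<otimes>\<^bsub>BijGroup UNIV\<^esub> \<sigma>)
      = perm_blocks \<pi> \<otimes>\<^bsub>AutGroup (struc_Union F)\<^esub> perm_blocks \<sigma>"
    using bij mult_AutGroup[OF perm_blocks_automorphism perm_blocks_automorphism] by metis
qed

lemma inj_on_perm_blocks: "inj_on perm_blocks (carrier (BijGroup (UNIV :: nat set)))"
proof (rule inj_onI)
  fix \<pi> \<sigma> :: "nat \<Rightarrow> nat" assume eq: "perm_blocks \<pi> = perm_blocks \<sigma>"
  show "\<pi> = \<sigma>"
  proof
    fix n
    obtain x where x: "x \<in> fst (B n)"
      using B_nonempty by blast
    then have "perm_blocks \<pi> x \<in> fst (B (\<pi> n))" "perm_blocks \<sigma> x \<in> fst (B (\<sigma> n))"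
      using perm_blocks_in_block transfer_in by simp_all
    then have "perm_blocks \<pi> x \<in> fst (B (\<pi> n)) \<inter> fst (B (\<sigma> n))"
      using eq by simp
    then show "\<pi> n = \<sigma> n"
      using B_disjoint by blast
  qed
qed

theorem has_Sym_omega: "has_Sym_omega (struc_Union F)"
  by (rule has_Sym_omegaI[OF perm_blocks_hom inj_on_perm_blocks])

end

lemma has_Sym_omega_T_R_family:
  fixes F :: "('s, 'a) struc set"
  assumes ar: "2 \<le> ar R" and struc: "\<And>D. D \<in> F \<Longrightarrow> is_struc ar D"
    and disjoint: "disjoint_family_on fst F" and infinite: "infinite {D \<in> F. is_T_R ar R D}"
  shows "has_Sym_omega (struc_Union F)"
proof -
  obtain B :: "nat \<Rightarrow> ('s, 'a) struc" where B: "inj B" "range B \<subseteq> {D \<in> F. is_T_R ar R D}"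
    using infinite_countable_subset[OF infinite] by blast
  then have T: "is_T_R ar R (B n)" "B n \<in> F" for n
    by auto
  interpret isomorphic_blocks ar F B
  proof
    show "fst (B n) \<noteq> {}" for n
      using T(1)[of n] by (auto simp: is_T_R_def)
    show "isomorphic (B 0) (B n)" for n
      using T_R_isomorphic[OF T(1) T(1) ar] .
  qed (use struc disjoint B T in auto)
  show ?thesis
    by (rule has_Sym_omega)
qed

lemma disjoint_family_on_image:
  assumes "\<forall>i\<in>I. \<forall>i'\<in>I. i \<noteq> i' \<longrightarrow> A (T i) \<inter> A (T i') = {}"
  shows "disjoint_family_on A (T ` I)"
  using assms unfolding disjoint_family_on_def by (metis imageE)

lemma disjoint_family_on_Un:
  assumes "disjoint_family_on A S" "disjoint_family_on A S'" "\<And>m n. m \<in> S \<Longrightarrow> n \<in> S' \<Longrightarrow> A m \<inter> A n = {}"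
  shows "disjoint_family_on A (S \<union> S')"
  using assms unfolding disjoint_family_on_def by (metis Int_commute Un_iff)

lemma disjoint_family_on_insertI:
  assumes "disjoint_family_on A S" "\<And>n. n \<in> S \<Longrightarrow> A m \<inter> A n = {}"
  shows "disjoint_family_on A (insert m S)"
  using assms unfolding disjoint_family_on_def by (metis Int_commute insert_iff)

lemma forest_has_Sym_omega:
  fixes T :: "'i \<Rightarrow> ('s, 'a) struc" and T' :: "'j \<Rightarrow> ('s, 'a) struc"
  assumes ar: "2 \<le> ar R" and I: "infinite I"
    and T: "\<forall>i\<in>I. is_T_R ar R (T i)" and T': "\<forall>j\<in>J. is_T'_R ar R (T' j)"
    and disj_T: "\<forall>i\<in>I. \<forall>i'\<in>I. i \<noteq> i' \<longrightarrow> fst (T i) \<inter> fst (T i') = {}"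
    and disj_T': "\<forall>j\<in>J. \<forall>j'\<in>J. j \<noteq> j' \<longrightarrow> fst (T' j) \<inter> fst (T' j') = {}"
    and disj_TT': "\<forall>i\<in>I. \<forall>j\<in>J. fst (T i) \<inter> fst (T' j) = {}"
    and M: "is_struc ar M" "\<forall>i\<in>I. fst M \<inter> fst (T i) = {}" "\<forall>j\<in>J. fst M \<inter> fst (T' j) = {}"
  shows "is_struc ar (struc_Union (insert M (T ` I \<union> T' ` J)))"
    and "has_Sym_omega (struc_Union (insert M (T ` I \<union> T' ` J)))"
proof -
  let ?F = "insert M (T ` I \<union> T' ` J)"
  have struc: "is_struc ar D" if "D \<in> ?F" for D
    using that M(1) T T' by (auto intro: is_struc_if_T_R is_struc_if_T'_R)
  then show "is_struc ar (struc_Union ?F)"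
    by (rule is_struc_struc_Union)
  have "disjoint_family_on fst (T ` I \<union> T' ` J)"
    using disj_TT' by (intro disjoint_family_on_Un disjoint_family_on_image disj_T disj_T') blast
  then have disjoint: "disjoint_family_on fst ?F"
    using M(2,3) by (intro disjoint_family_on_insertI) blast+
  have "inj_on T I"
  proof (rule inj_onI)
    fix i i' assume i: "i \<in> I" "i' \<in> I" "T i = T i'"
    show "i = i'"
    proof (rule ccontr)
      assume "i \<noteq> i'"
      then have "fst (T i) = {}"
        using disj_T i by force
      then show False
        using T i(1) by (auto simp: is_T_R_def)
    qed
  qed
  then have "infinite (T ` I)"
    using I finite_image_iff by blast
  then have infinite: "infinite {D \<in> ?F. is_T_R ar R D}"
    by (rule infinite_super[rotated]) (use T in blast)
  show "has_Sym_omega (struc_Union ?F)"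
    using has_Sym_omega_T_R_family[OF ar struc disjoint infinite] .
qed

section \<open>Adding a rigid structure\<close>

lemma replicate_set_iff:
  assumes "0 < q"
  shows "t \<in> {replicate q a |a. a \<in> S} \<longleftrightarrow> length t = q \<and> (\<exists>a\<in>S. set t = {a})"
proof
  assume "length t = q \<and> (\<exists>a\<in>S. set t = {a})"
  then obtain a where "a \<in> S" "length t = q" "set t = {a}"
    by blast
  then have "t = replicate q a"
    by (metis replicate_length_same singletonD)
  then show "t \<in> {replicate q a |a. a \<in> S}"
    using \<open>a \<in> S\<close> by blast
qed (use assms in auto)

lemma map_in_replicate_set_iff:
  assumes f: "bij_betw f S S" and t: "set t \<subseteq> S" and q: "0 < q"
  shows "map f t \<in> {replicate q a |a. a \<in> S} \<longleftrightarrow> t \<in> {replicate q a |a. a \<in> S}"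
proof -
  have "(\<exists>b\<in>S. f ` set t = {b}) \<longleftrightarrow> (\<exists>a\<in>S. set t = {a})"
  proof
    assume "\<exists>b\<in>S. f ` set t = {b}"
    then obtain b where "f ` set t = {b}"
      by blast
    moreover have "b \<in> f ` set t"
      using calculation by blast
    ultimately obtain a where "a \<in> set t" "f a = b"
      by blast
    then have "set t = {a}"
      using \<open>f ` set t = {b}\<close> t f by (auto simp: bij_betw_def inj_on_def) blast
    then show "\<exists>a\<in>S. set t = {a}"
      using t by blast
  qed (use f in \<open>auto dest: bij_betwE\<close>)
  then show ?thesis
    unfolding replicate_set_iff[OF q] by simp
qed

lemma automorphisms_with_Q:
  assumes q: "0 < ar Q" and MQ: "snd M Q = {}"
  shows "automorphisms (with_Q ar Q M) = automorphisms M"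
proof -
  have "struc_iso (with_Q ar Q M) (with_Q ar Q M) f \<longleftrightarrow> struc_iso M M f" for f
  proof (cases "bij_betw f (fst M) (fst M)")
    case True
    have "(t \<in> snd (with_Q ar Q M) s \<longleftrightarrow> map f t \<in> snd (with_Q ar Q M) s) \<longleftrightarrow>
        (t \<in> snd M s \<longleftrightarrow> map f t \<in> snd M s)" if "set t \<subseteq> fst M" for s t
      using map_in_replicate_set_iff[OF True that q] MQ by (cases "s = Q") (simp_all add: with_Q_def)
    then show ?thesis
      unfolding struc_iso_def by (simp add: with_Q_def)
  qed (simp add: struc_iso_def with_Q_def)
  then show ?thesis
    by (simp add: automorphisms_def with_Q_def)
qed

lemma AutGroup_with_Q:
  assumes "0 < ar Q" "snd M Q = {}"
  shows "AutGroup (with_Q ar Q M) = AutGroup M"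
  using automorphisms_with_Q[of ar Q M, OF assms] by (simp add: AutGroup_def with_Q_def)

lemma struc_un_tuple_iff:
  assumes arity: "\<forall>s. 0 < ar s" and N: "is_struc ar N"
    and disj: "fst A \<inter> fst N = {}" and t: "set t \<subseteq> fst A"
  shows "t \<in> snd (struc_un A N) s \<longleftrightarrow> t \<in> snd A s"
proof -
  have "t \<notin> snd N s"
  proof
    assume "t \<in> snd N s"
    then have "length t = ar s" "set t \<subseteq> fst N"
      using N by (auto simp: is_struc_def)
    then have "t \<noteq> []" "set t \<subseteq> fst N"
      using arity by (metis length_greater_0_conv)+
    then show False
      using t disj by (cases t) auto
  qed
  then show ?thesis
    by (simp add: struc_un_def)
qed

lemma automorphism_image_loops:
  assumes f: "f \<in> automorphisms U"
  shows "f ` {x \<in> fst U. replicate q x \<in> snd U Q} = {x \<in> fst U. replicate q x \<in> snd U Q}"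
proof -
  have bij: "bij_betw f (fst U) (fst U)"
    using f by (simp add: automorphisms_def struc_iso_def)
  have "replicate q x \<in> snd U Q \<longleftrightarrow> map f (replicate q x) \<in> snd U Q" if "x \<in> fst U" for x
  proof -
    have "set (replicate q x) \<subseteq> fst U"
      using that by auto
    then show ?thesis
      using f unfolding automorphisms_def struc_iso_def by blast
  qed
  then have loop: "replicate q x \<in> snd U Q \<longleftrightarrow> replicate q (f x) \<in> snd U Q" if "x \<in> fst U" for x
    using that by simp
  show ?thesis
  proof
    show "f ` {x \<in> fst U. replicate q x \<in> snd U Q} \<subseteq> {x \<in> fst U. replicate q x \<in> snd U Q}"
      using bij loop by (auto dest: bij_betwE)
  next
    show "{x \<in> fst U. replicate q x \<in> snd U Q} \<subseteq> f ` {x \<in> fst U. replicate q x \<in> snd U Q}"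
    proof
      fix y assume y: "y \<in> {x \<in> fst U. replicate q x \<in> snd U Q}"
      then obtain x where "x \<in> fst U" "y = f x"
        using bij by (auto simp: bij_betw_def)
      then show "y \<in> f ` {x \<in> fst U. replicate q x \<in> snd U Q}"
        using y loop by blast
    qed
  qed
qed

lemma restrict_automorphism:
  assumes f: "f \<in> automorphisms U" and sub: "fst V \<subseteq> fst U" and inv: "f ` fst V = fst V"
    and tuples: "\<And>s t. set t \<subseteq> fst V \<Longrightarrow> t \<in> snd U s \<longleftrightarrow> t \<in> snd V s"
  shows "restrict f (fst V) \<in> automorphisms V"
proof -
  have iso: "struc_iso U U f"
    using f by (simp add: automorphisms_def)
  have "struc_iso V V f"
    unfolding struc_iso_def
  proof (intro conjI allI impI)
    show "bij_betw f (fst V) (fst V)"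
      using iso sub inv by (auto simp: struc_iso_def intro: bij_betw_subset)
    fix s t assume t: "set t \<subseteq> fst V"
    have "t \<in> snd V s \<longleftrightarrow> t \<in> snd U s"
      using tuples[OF t] by simp
    also have "\<dots> \<longleftrightarrow> map f t \<in> snd U s"
      using iso t sub unfolding struc_iso_def by blast
    also have "\<dots> \<longleftrightarrow> map f t \<in> snd V s"
      using t inv by (intro tuples) auto
    finally show "t \<in> snd V s \<longleftrightarrow> map f t \<in> snd V s" .
  qed
  then have "struc_iso V V (restrict f (fst V))"
    by (rule struc_iso_cong) simp
  then show ?thesis
    by (simp add: automorphisms_def)
qed

lemma extend_automorphism:
  assumes g: "g \<in> automorphisms A" and arity: "\<forall>s. 0 < ar s"
    and A: "is_struc ar A" and N: "is_struc ar N" and disj: "fst A \<inter> fst N = {}"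
  shows "(\<lambda>x\<in>fst A \<union> fst N. if x \<in> fst A then g x else x) \<in> automorphisms (struc_un A N)"
proof -
  define ext where "ext h = (\<lambda>x\<in>fst A \<union> fst N. if x \<in> fst A then h x else x)" for h :: "'a \<Rightarrow> 'a"
  define g' where "g' = restrict (inv_into (fst A) g) (fst A)"
  have g': "g' \<in> automorphisms A"
    using subgroup.m_inv_closed[OF subgroup_automorphisms g] g
    by (simp add: g'_def inv_BijGroup automorphisms_eq)
  have bij: "bij_betw h (fst A) (fst A)" if "h \<in> automorphisms A" for h
    using that by (simp add: automorphisms_def struc_iso_def)
  have ext_tuple: "map (ext h) t \<in> snd (struc_un A N) s"
    if h: "h \<in> automorphisms A" and t: "t \<in> snd (struc_un A N) s" for h s t
  proof (cases "t \<in> snd A s")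
    case True
    then have "set t \<subseteq> fst A"
      using A by (auto simp: is_struc_def)
    then have eq: "map (ext h) t = map h t"
      by (auto simp: ext_def)
    have "map h t \<in> snd A s"
      using h True \<open>set t \<subseteq> fst A\<close> by (simp add: automorphisms_def struc_iso_def)
    then show ?thesis
      unfolding eq by (simp add: struc_un_def)
  next
    case False
    then have "set t \<subseteq> fst N"
      using t N by (auto simp: struc_un_def is_struc_def)
    then have "ext h x = x" if "x \<in> set t" for x
      using that disj by (auto simp: ext_def)
    then have "map (ext h) t = t"
      by (rule map_idI)
    then show ?thesis
      using t by simp
  qed
  have closed: "ext h x \<in> fst A \<union> fst N" if "h \<in> automorphisms A" "x \<in> fst A \<union> fst N" for h x
    using that bij by (auto simp: ext_def dest: bij_betwE)
  have inverse: "ext g' (ext g x) = x" "ext g (ext g' x) = x" if "x \<in> fst A \<union> fst N" for x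
  proof -
    have "g x \<in> fst A" "g' x \<in> fst A" if "x \<in> fst A"
      using that bij[OF g] bij[OF g'] by (auto dest: bij_betwE)
    then show "ext g' (ext g x) = x" "ext g (ext g' x) = x"
      using \<open>x \<in> fst A \<union> fst N\<close> bij[OF g]
      by (auto simp: ext_def g'_def bij_betw_inv_into_left bij_betw_inv_into_right)
  qed
  have "ext g \<in> automorphisms (struc_un A N)"
  proof (rule automorphismI)
    show "ext g \<in> extensional (fst (struc_un A N))"
      by (simp add: ext_def struc_un_def)
    show "bij_betw (ext g) (fst (struc_un A N)) (fst (struc_un A N))"
      using closed[OF g] closed[OF g'] inverse by (intro bij_betwI[where g = "ext g'"]) (auto simp: struc_un_def)
    show "ext g' (ext g x) = x" if "x \<in> fst (struc_un A N)" for x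
      using that inverse by (simp add: struc_un_def)
    show "map (ext g) t \<in> snd (struc_un A N) s" "map (ext g') t \<in> snd (struc_un A N) s"
      if "t \<in> snd (struc_un A N) s" for s t
      using ext_tuple[OF g that] ext_tuple[OF g' that] by simp_all
  qed
  then show ?thesis
    unfolding ext_def .
qed

lemma automorphism_struc_un_rigid:
  assumes arity: "\<forall>s. 0 < ar s" and A: "is_struc ar A" and N: "is_struc ar N"
    and disj: "fst A \<inter> fst N = {}" and rigid: "rigid N"
    and loops: "\<forall>a\<in>fst A. replicate (ar Q) a \<in> snd A Q" and NQ: "snd N Q = {}"
    and f: "f \<in> automorphisms (struc_un A N)"
  shows "restrict f (fst A) \<in> automorphisms A" and "\<And>x. x \<in> fst N \<Longrightarrow> f x = x"
proof -
  have "x \<in> fst A" if "replicate (ar Q) x \<in> snd A Q" for x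
  proof -
    have "set (replicate (ar Q) x) \<subseteq> fst A"
      using A that unfolding is_struc_def by blast
    then show ?thesis
      using arity by simp
  qed
  then have "{x \<in> fst (struc_un A N). replicate (ar Q) x \<in> snd (struc_un A N) Q} = fst A"
    using loops NQ by (auto simp: struc_un_def)
  then have f_A: "f ` fst A = fst A"
    using automorphism_image_loops[OF f, of "ar Q" Q] by simp
  have bij: "bij_betw f (fst (struc_un A N)) (fst (struc_un A N))"
    using f by (simp add: automorphisms_def struc_iso_def)
  moreover have "bij_betw f (fst A) (fst A)"
    by (rule bij_betw_subset[OF bij _ f_A]) (simp add: struc_un_def)
  ultimately have "bij_betw f (fst (struc_un A N) - fst A) (fst (struc_un A N) - fst A)"
    by (rule bij_betw_DiffI) (simp_all add: struc_un_def)
  moreover have "fst (struc_un A N) - fst A = fst N"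
    using disj by (auto simp: struc_un_def)
  ultimately have f_N: "f ` fst N = fst N"
    by (simp add: bij_betw_def)
  show "restrict f (fst A) \<in> automorphisms A"
  proof (rule restrict_automorphism[OF f _ f_A])
    show "fst A \<subseteq> fst (struc_un A N)"
      by (simp add: struc_un_def)
    show "t \<in> snd (struc_un A N) s \<longleftrightarrow> t \<in> snd A s" if "set t \<subseteq> fst A" for s t
      by (rule struc_un_tuple_iff[OF arity N disj that])
  qed
  have "restrict f (fst N) \<in> automorphisms N"
  proof (rule restrict_automorphism[OF f _ f_N])
    show "fst N \<subseteq> fst (struc_un A N)"
      by (simp add: struc_un_def)
    have "fst N \<inter> fst A = {}"
      using disj by blast
    then show "t \<in> snd (struc_un A N) s \<longleftrightarrow> t \<in> snd N s" if "set t \<subseteq> fst N" for s t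
      unfolding struc_un_commute[of A N] by (rule struc_un_tuple_iff[OF arity A _ that])
  qed
  then have f_restrict: "restrict f (fst N) = (\<lambda>x\<in>fst N. x)"
    using rigid by (simp add: rigid_def)
  show "f x = x" if "x \<in> fst N" for x
    using fun_cong[OF f_restrict, of x] that by simp
qed

lemma AutGroup_struc_un_rigid:
  fixes A N :: "('s, 'a) struc"
  assumes arity: "\<forall>s. 0 < ar s" and A: "is_struc ar A" and N: "is_struc ar N"
    and disj: "fst A \<inter> fst N = {}" and rigid: "rigid N"
    and loops: "\<forall>a\<in>fst A. replicate (ar Q) a \<in> snd A Q" and NQ: "snd N Q = {}"
  shows "AutGroup (struc_un A N) \<cong> AutGroup A"
proof -
  define ext where "ext g = (\<lambda>x\<in>fst A \<union> fst N. if x \<in> fst A then g x else x)" for g :: "'a \<Rightarrow> 'a"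
  have ext_aut: "ext g \<in> automorphisms (struc_un A N)" if "g \<in> automorphisms A" for g
    unfolding ext_def by (rule extend_automorphism[OF that arity A N disj])
  have maps_A: "g x \<in> fst A" if "g \<in> automorphisms A" "x \<in> fst A" for g x
    using that by (auto simp: automorphisms_def struc_iso_def dest: bij_betwE)
  have "ext \<in> hom (AutGroup A) (AutGroup (struc_un A N))"
  proof (rule homI)
    fix g h assume "g \<in> carrier (AutGroup A)" "h \<in> carrier (AutGroup A)"
    then have gh: "g \<in> automorphisms A" "h \<in> automorphisms A"
      by simp_all
    have "ext (compose (fst A) g h) x = compose (fst (struc_un A N)) (ext g) (ext h) x" for x
      using maps_A[OF gh(2), of x]
      by (cases "x \<in> fst A"; cases "x \<in> fst N") (simp_all add: ext_def compose_def struc_un_def)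
    then have "ext (compose (fst A) g h) = compose (fst (struc_un A N)) (ext g) (ext h)" ..
    then show "ext (g \<otimes>\<^bsub>AutGroup A\<^esub> h) = ext g \<otimes>\<^bsub>AutGroup (struc_un A N)\<^esub> ext h"
      using gh ext_aut by (simp add: mult_AutGroup)
  qed (use ext_aut in simp)
  moreover have "bij_betw ext (automorphisms A) (automorphisms (struc_un A N))"
  proof (rule bij_betw_imageI)
    show "inj_on ext (automorphisms A)"
    proof (rule inj_onI)
      fix g h assume gh: "g \<in> automorphisms A" "h \<in> automorphisms A" and eq: "ext g = ext h"
      have "g x = h x" if "x \<in> fst A" for x
        using fun_cong[OF eq, of x] that by (simp add: ext_def)
      then show "g = h"
        using gh by (intro extensionalityI[of _ "fst A"]) (auto simp: automorphisms_def)
    qed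
    have "f \<in> ext ` automorphisms A" if f: "f \<in> automorphisms (struc_un A N)" for f
    proof
      show "restrict f (fst A) \<in> automorphisms A"
        by (rule automorphism_struc_un_rigid(1)[OF arity A N disj rigid loops NQ f])
      have "f \<in> extensional (fst A \<union> fst N)"
        using f by (simp add: automorphisms_def struc_un_def)
      then have "f x = ext (restrict f (fst A)) x" for x
        using automorphism_struc_un_rigid(2)[OF arity A N disj rigid loops NQ f, of x]
        by (cases "x \<in> fst A"; cases "x \<in> fst N") (simp_all add: ext_def extensional_def)
      then show "f = ext (restrict f (fst A))" ..
    qed
    then show "ext ` automorphisms A = automorphisms (struc_un A N)"
      using ext_aut by (intro subset_antisym) blast+
  qed
  ultimately have "ext \<in> iso (AutGroup A) (AutGroup (struc_un A N))"
    by (intro isoI) simp_all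
  then show ?thesis
    by (rule group.iso_sym[OF group_AutGroup is_isoI])
qed

lemma AutGroup_struc_un_with_Q_rigid:
  assumes arity: "\<forall>s. 0 < ar s" and M: "is_struc ar M" and N: "is_struc ar N"
    and MQ: "snd M Q = {}" and NQ: "snd N Q = {}" and disj: "fst M \<inter> fst N = {}" and rigid: "rigid N"
  shows "AutGroup (struc_un (with_Q ar Q M) N) \<cong> AutGroup M"
proof -
  have "AutGroup (struc_un (with_Q ar Q M) N) \<cong> AutGroup (with_Q ar Q M)"
    using disj rigid NQ
    by (intro AutGroup_struc_un_rigid[OF arity is_struc_with_Q[OF M] N]) (auto simp: with_Q_def)
  also have "AutGroup (with_Q ar Q M) = AutGroup M"
    using arity MQ by (simp add: AutGroup_with_Q)
  finally show ?thesis .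
qed

theorem lemma3p1:
  fixes ar :: "'s::countable \<Rightarrow> nat"
    and R :: 's
    and P :: "('s, 'a) struc set"
  assumes arity_pos: "\<forall>s. 0 < ar s"
    and R_ar: "2 \<le> ar R"
    and P_prop: "is_property ar P"
    and aut_inv: "\<forall>M N. is_struc ar M \<longrightarrow> is_struc ar N \<longrightarrow> AutGroup M \<cong> AutGroup N \<longrightarrow>
                     (M \<in> P \<longleftrightarrow> N \<in> P)"
  shows
    "((\<forall>M. is_struc ar M \<longrightarrow> has_Sym_omega M \<longrightarrow> M \<notin> P) \<longrightarrow>
       (\<forall>(I :: 'i set) (J :: 'j set) T T'.
          infinite I \<longrightarrow> (\<forall>i\<in>I. is_T_R ar R (T i)) \<longrightarrow> (\<forall>j\<in>J. is_T'_R ar R (T' j)) \<longrightarrow>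
          (\<forall>i\<in>I. \<forall>i'\<in>I. i \<noteq> i' \<longrightarrow> fst (T i) \<inter> fst (T i') = {}) \<longrightarrow>
          (\<forall>j\<in>J. \<forall>j'\<in>J. j \<noteq> j' \<longrightarrow> fst (T' j) \<inter> fst (T' j') = {}) \<longrightarrow>
          (\<forall>i\<in>I. \<forall>j\<in>J. fst (T i) \<inter> fst (T' j) = {}) \<longrightarrow>
          struc_Union (T ` I \<union> T' ` J) \<notin> P \<and>
          (\<forall>M' Q. is_struc ar M' \<longrightarrow> Q \<noteq> R \<longrightarrow> snd M' Q = {} \<longrightarrow>
             (\<forall>i\<in>I. fst M' \<inter> fst (T i) = {}) \<longrightarrow> (\<forall>j\<in>J. fst M' \<inter> fst (T' j) = {}) \<longrightarrow>
             struc_Union ({with_Q ar Q M'} \<union> T ` I \<union> T' ` J) \<notin> P)))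
     \<and>
     ((\<forall>M. is_struc ar M \<longrightarrow> rigid M \<longrightarrow> M \<in> P) \<longrightarrow>
       (\<forall>N. is_struc ar N \<longrightarrow> finite (fst N) \<longrightarrow> rigid N \<longrightarrow> connected_struc N \<longrightarrow>
            fst N \<noteq> {} \<longrightarrow> N \<in> P))
     \<and>
     (\<forall>Q M. Q \<noteq> R \<longrightarrow> M \<in> P \<longrightarrow> snd M Q = {} \<longrightarrow>
       (\<forall>N. is_struc ar N \<longrightarrow> finite (fst N) \<longrightarrow> rigid N \<longrightarrow> connected_struc N \<longrightarrow>
            fst N \<noteq> {} \<longrightarrow> snd N Q = {} \<longrightarrow> fst M \<inter> fst N = {} \<longrightarrow>
            struc_un (with_Q ar Q M) N \<in> P))"
proof -
  have in_P_struc: "is_struc ar M" if "M \<in> P" for M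
    using that P_prop by (auto simp: is_property_def)
  show ?thesis
    apply (intro conjI impI allI)
    subgoal premises prems for I J T T'
      using forest_has_Sym_omega[OF R_ar prems(2-7) is_struc_empty] prems(1)
      by (simp add: struc_Union_insert_empty del: split_paired_All)
    subgoal premises prems for I J T T' M' Q
      using forest_has_Sym_omega[OF R_ar prems(2-7) is_struc_with_Q[OF prems(8)]] prems(1,11,12)
      by (simp add: fst_with_Q del: split_paired_All)
    subgoal
      by blast
    subgoal premises prems for Q M N
      using AutGroup_struc_un_with_Q_rigid[OF arity_pos in_P_struc prems(4)] prems aut_inv
        is_struc_struc_un[OF is_struc_with_Q[OF in_P_struc] prems(4)] in_P_struc
      by blast
    done
qed

end
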